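(* Let $k\ge2$ and $n,t,m_0\ge1$ be integers, and let $\varepsilon\in(0,1)$ and $d,\varepsilon^*>0$ satisfy $d+k\varepsilon^*\le\varepsilon/2$ and $\sqrt{\varepsilon^*}\le\varepsilon/4$. Let $H$ be a $k$-partite $k$-graph with parts $V_1,\dots,V_k$, each of size $n$, such that $\delta'_{k-1}(H)\ge(\frac12+\varepsilon)n$. Suppose $V(H)=V_0\cup W_1\cup\dots\cup W_{kt}$ is a partition such that $|V_0|\le \varepsilon^* kn$, each $V_i\setminus V_0$ is the union of exactly $t$ of the clusters $W_1,\dots,W_{kt}$, all clusters have the same size $m_0$, and all but at most $\varepsilon^*(kt)^k$ of the legal $k$-sets $\{j_1,\dots,j_k\}\subseteq[kt]$ have $(W_{j_1},\dots,W_{j_k})$ $\varepsilon^*$-regular. Let $\mathcal R=\mathcal R(\varepsilon^*,d)$ be the corresponding cluster hypergraph. Then the number of legal $(k-1)$-sets $S\subseteq[kt]$ with $\deg_{\mathcal R}(S)<(\frac12+\frac{\varepsilon}{4})t$ is at most $k^{k+1}\sqrt{\varepsilon^*}\,t^{k-1}$.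
   Context: A $k$-partite $k$-graph $H$ is a $k$-graph with a fixed partition $V(H)=V_1\cup\dots\cup V_k$ such that every edge meets each $V_i$ in at most one vertex. A set $S$ is legal if $|S\cap V_i|\le1$ for all $i$. $\deg_H(S)$ is the number of $(k-|S|)$-sets $S'$ with $S\cup S'\in E(H)$; $\delta'_{k-1}(H)$ is the minimum of $\deg_H(S)$ over legal $(k-1)$-sets. For pairwise disjoint $A_1,\dots,A_k\subseteq V(H)$, $e_H(A_1,\dots,A_k)$ is the number of $(a_1,\dots,a_k)\in A_1\times\dots\times A_k$ with $\{a_1,\dots,a_k\}\in E(H)$, and $d_H(A_1,\dots,A_k)=e_H(A_1,\dots,A_k)/(|A_1|\cdots|A_k|)$. A $k$-tuple $(U_1,\dots,U_k)$ of disjoint sets is $(\varepsilon^*,d')$-regular if $|d_H(A_1,\dots,A_k)-d'|\le\varepsilon^*$ for all $A_i\subseteq U_i$ with $|A_i|\ge\varepsilon^*|U_i|$, and $\varepsilon^*$-regular if it is $(\varepsilon^*,d')$-regular for some $d'\ge0$. In the setting of the statement, an index set $S\subseteq[kt]$ is legal if its clusters lie in distinct parts $V_i$; the cluster hypergraph $\mathcal R(\varepsilon^*,d)$ is the $k$-partite $k$-graph on vertex set $[kt]$ (with the $t$ indices of clusters inside $V_i$ forming its $i$-th part) whose edges are the legal $k$-sets $\{j_1,\dots,j_k\}$ such that $(W_{j_1},\dots,W_{j_k})$ is $\varepsilon^*$-regular and $d_H(W_{j_1},\dots,W_{j_k})\ge d$. *)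

theory Defs
  imports "HOL-Library.FuncSet" Complex_Main
begin

definition legal :: "nat \<Rightarrow> (nat \<Rightarrow> 'a set) \<Rightarrow> 'a set \<Rightarrow> bool" where
  "legal k P S \<longleftrightarrow> (\<forall>i<k. card (S \<inter> P i) \<le> 1)"

definition kpartite_kgraph ::
  "nat \<Rightarrow> 'a set \<Rightarrow> (nat \<Rightarrow> 'a set) \<Rightarrow> 'a set set \<Rightarrow> bool" where
  "kpartite_kgraph k V P E \<longleftrightarrow>
     finite V \<and> (\<forall>i<k. P i \<subseteq> V) \<and> V = (\<Union>i<k. P i) \<and>
     (\<forall>i<k. \<forall>j<k. i \<noteq> j \<longrightarrow> P i \<inter> P j = {}) \<and>
     (\<forall>e\<in>E. e \<subseteq> V \<and> card e = k \<and> legal k P e)"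

definition deg :: "nat \<Rightarrow> 'a set set \<Rightarrow> 'a set \<Rightarrow> nat" where
  "deg k E S = card {S'. card S' = k - card S \<and> S \<union> S' \<in> E}"

definition min_legal_codeg :: "nat \<Rightarrow> 'a set \<Rightarrow> (nat \<Rightarrow> 'a set) \<Rightarrow> 'a set set \<Rightarrow> nat" where
  "min_legal_codeg k V P E =
     Min {deg k E S | S. S \<subseteq> V \<and> card S = k - 1 \<and> legal k P S}"

definition e_count :: "nat \<Rightarrow> 'a set set \<Rightarrow> (nat \<Rightarrow> 'a set) \<Rightarrow> nat" where
  "e_count k E A = card {f \<in> PiE {..<k} A. f ` {..<k} \<in> E}"

definition density :: "nat \<Rightarrow> 'a set set \<Rightarrow> (nat \<Rightarrow> 'a set) \<Rightarrow> real" where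
  "density k E A = real (e_count k E A) / (\<Prod>i<k. real (card (A i)))"

definition regular_with :: "nat \<Rightarrow> 'a set set \<Rightarrow> real \<Rightarrow> real \<Rightarrow> (nat \<Rightarrow> 'a set) \<Rightarrow> bool" where
  "regular_with k E eps d' U \<longleftrightarrow>
     (\<forall>A. (\<forall>i<k. A i \<subseteq> U i \<and> real (card (A i)) \<ge> eps * real (card (U i)))
          \<longrightarrow> \<bar>density k E A - d'\<bar> \<le> eps)"

definition eps_regular :: "nat \<Rightarrow> 'a set set \<Rightarrow> real \<Rightarrow> (nat \<Rightarrow> 'a set) \<Rightarrow> bool" where
  "eps_regular k E eps U \<longleftrightarrow> (\<exists>d'\<ge>0. regular_with k E eps d' U)"

definition cluster_parts :: "nat \<Rightarrow> (nat \<Rightarrow> 'a set) \<Rightarrow> (nat \<Rightarrow> 'a set) \<Rightarrow> nat \<Rightarrow> nat set" where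
  "cluster_parts N P W i = {j \<in> {1..N}. W j \<subseteq> P i}"

definition cluster_tuple :: "(nat \<Rightarrow> 'a set) \<Rightarrow> nat set \<Rightarrow> nat \<Rightarrow> 'a set" where
  "cluster_tuple W J = (\<lambda>i. W (sorted_list_of_set J ! i))"

definition cluster_edges ::
  "nat \<Rightarrow> nat \<Rightarrow> (nat \<Rightarrow> 'a set) \<Rightarrow> 'a set set \<Rightarrow> (nat \<Rightarrow> 'a set) \<Rightarrow> real \<Rightarrow> real \<Rightarrow> nat set set" where
  "cluster_edges k t P E W epss d =
     {J. J \<subseteq> {1..k*t} \<and> card J = k \<and> legal k (cluster_parts (k*t) P W) J \<and>
         eps_regular k E epss (cluster_tuple W J) \<and>
         density k E (cluster_tuple W J) \<ge> d}"

end

theory Submission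
  imports Defs "HOL-Library.Disjoint_Sets"
begin

text \<open>A legal (k-1)-set S of clusters misses exactly one part, say the i-th. Choosing one vertex
  from each cluster of S gives a legal (k-1)-set of H, which by the codegree condition extends to
  at least (1/2 + eps - k epss) n edges through P i - V0. Sorting these extensions by the cluster j
  containing the new vertex, they become k-partite edges between the clusters of S + j: at most
  m0^k of them if S + j is an edge of R or an irregular k-set, and fewer than d m0^k otherwise.
  Comparing the two counts, the degree of S in R plus the number of irregular k-sets through S is
  at least (1/2 + eps/2) t. Hence every S of low degree lies in at least sqrt(epss) t irregular
  k-sets, and since an irregular k-set contains only k sets of size k-1, double counting against
  the at most epss (kt)^k irregular k-sets gives the bound.\<close>

lemma card_edge_tuples_reindex:
  assumes bij: "bij_betw h I J"
  shows "card {f \<in> PiE I (\<lambda>i. W (h i)). f ` I \<in> E} = card {g \<in> PiE J W. g ` J \<in> E}"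
proof -
  let ?comp = "\<lambda>g. restrict (g \<circ> h) I"
  let ?uncomp = "\<lambda>f. restrict (f \<circ> inv_into I h) J"
  have h_into: "h x \<in> J" if "x \<in> I" for x
    using bij that by (auto simp: bij_betw_def)
  have inv_into: "inv_into I h y \<in> I" and h_inv: "h (inv_into I h y) = y" if "y \<in> J" for y
    using bij that by (auto simp: bij_betw_def inv_into_into f_inv_into_f)
  have inv_h: "inv_into I h (h x) = x" if "x \<in> I" for x
    using bij that by (simp add: bij_betw_def)
  have img_comp: "?comp g ` I = g ` J" for g
    using bij by (auto simp: bij_betw_def image_comp)
  have img_uncomp: "?uncomp f ` J = f ` I" for f
  proof -
    have "?uncomp f ` J = f ` inv_into I h ` J"
      by (auto simp: image_comp)
    then show ?thesis
      using bij_betw_imp_surj_on[OF bij_betw_inv_into[OF bij]] by simp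
  qed
  have "bij_betw ?comp {g \<in> PiE J W. g ` J \<in> E} {f \<in> PiE I (\<lambda>i. W (h i)). f ` I \<in> E}"
  proof (rule bij_betw_byWitness[where f' = ?uncomp])
    show "\<forall>g\<in>{g \<in> PiE J W. g ` J \<in> E}. ?uncomp (?comp g) = g"
      by (auto intro!: PiE_ext[where k = J and s = W] simp: h_inv inv_into)
    show "\<forall>f\<in>{f \<in> PiE I (\<lambda>i. W (h i)). f ` I \<in> E}. ?comp (?uncomp f) = f"
      by (auto intro!: PiE_ext[where k = I and s = "\<lambda>i. W (h i)"] simp: inv_h h_into)
    show "?comp ` {g \<in> PiE J W. g ` J \<in> E} \<subseteq> {f \<in> PiE I (\<lambda>i. W (h i)). f ` I \<in> E}"
    proof (rule image_subsetI)
      fix g assume g: "g \<in> {g \<in> PiE J W. g ` J \<in> E}"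
      then have "?comp g \<in> PiE I (\<lambda>i. W (h i))"
        using h_into by (auto simp: PiE_iff)
      then show "?comp g \<in> {f \<in> PiE I (\<lambda>i. W (h i)). f ` I \<in> E}"
        using g img_comp[of g] by simp
    qed
    show "?uncomp ` {f \<in> PiE I (\<lambda>i. W (h i)). f ` I \<in> E} \<subseteq> {g \<in> PiE J W. g ` J \<in> E}"
    proof (rule image_subsetI)
      fix f assume f: "f \<in> {f \<in> PiE I (\<lambda>i. W (h i)). f ` I \<in> E}"
      then have "?uncomp f \<in> PiE J W"
        using inv_into h_inv by (fastforce simp: PiE_iff)
      then show "?uncomp f \<in> {g \<in> PiE J W. g ` J \<in> E}"
        using f img_uncomp[of f] by simp
    qed
  qed
  from bij_betw_same_card[OF this] show ?thesis
    by simp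
qed

lemma deg_eq_card_insert:
  assumes "card T + 1 = k"
  shows "deg k E T = card {w. insert w T \<in> E}"
proof -
  have "{S'. card S' = k - card T \<and> T \<union> S' \<in> E} = (\<lambda>w. {w}) ` {w. insert w T \<in> E}"
    using assms by (auto simp: card_1_singleton_iff)
  then show ?thesis
    unfolding deg_def by (simp add: card_image)
qed

lemma min_legal_codeg_le_deg:
  assumes "finite V" "T \<subseteq> V" "card T = k - 1" "legal k P T"
  shows "min_legal_codeg k V P E \<le> deg k E T"
proof -
  let ?D = "{deg k E S | S. S \<subseteq> V \<and> card S = k - 1 \<and> legal k P S}"
  have "finite ?D"
    using \<open>finite V\<close> by (auto intro: finite_subset[of _ "deg k E ` Pow V"])
  then show ?thesis
    unfolding min_legal_codeg_def using assms by (auto intro: Min_le)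
qed

lemma legal_set_misses_one_part:
  assumes "finite S" "S \<subseteq> (\<Union>i<k. Q i)" "disjoint_family_on Q {..<k}"
    and legal: "\<forall>i<k. card (S \<inter> Q i) \<le> 1" and "card S + 1 = k"
  obtains i where "i < k" "S \<inter> Q i = {}" "\<forall>i'<k. i' \<noteq> i \<longrightarrow> card (S \<inter> Q i') = 1"
proof -
  let ?c = "\<lambda>i. card (S \<inter> Q i)"
  have "card S = (\<Sum>i<k. ?c i)"
  proof -
    have "S = (\<Union>i<k. S \<inter> Q i)"
      using assms(2) by blast
    also have "card \<dots> = (\<Sum>i<k. ?c i)"
      by (rule card_UN_disjoint) (use assms(1,3) in \<open>auto simp: disjoint_family_on_def\<close>)
    finally show ?thesis .
  qed
  moreover have "(\<Sum>i<k. ?c i) + card {i. i < k \<and> ?c i = 0} = k"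
  proof -
    have "(\<Sum>i<k. ?c i + of_bool (?c i = 0)) = (\<Sum>i<k. 1::nat)"
      using legal by (intro sum.cong) (auto simp: le_Suc_eq)
    then show ?thesis
      by (simp add: sum.distrib Int_def)
  qed
  ultimately have "card {i. i < k \<and> ?c i = 0} = 1"
    using assms(5) by simp
  then obtain i where i: "{i. i < k \<and> ?c i = 0} = {i}"
    by (auto simp: card_1_singleton_iff)
  show thesis
  proof
    show "i < k" "S \<inter> Q i = {}"
      using i assms(1) by auto
    show "\<forall>i'<k. i' \<noteq> i \<longrightarrow> ?c i' = 1"
      using i legal by (fastforce simp: le_Suc_eq)
  qed
qed

lemma double_counting_le:
  fixes r s :: real
  assumes "finite A" "finite B"
    and "\<And>a. a \<in> A \<Longrightarrow> r \<le> card {b \<in> B. R a b}"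
    and "\<And>b. b \<in> B \<Longrightarrow> card {a \<in> A. R a b} \<le> s"
  shows "card A * r \<le> card B * s"
proof -
  have "card A * r \<le> (\<Sum>a\<in>A. real (card {b \<in> B. R a b}))"
    using sum_mono[of A "\<lambda>_. r", OF assms(3)] by simp
  also have "\<dots> = (\<Sum>b\<in>B. real (card {a \<in> A. R a b}))"
    using sum_multicount_gen[OF assms(1,2), of R "\<lambda>b. card {a \<in> A. R a b}"]
    by (simp flip: of_nat_sum)
  also have "\<dots> \<le> card B * s"
    using sum_mono[of B _ "\<lambda>_. s", OF assms(4)] by simp
  finally show ?thesis .
qed

locale clustered_kgraph =
  fixes k t m0 :: nat and V V0 :: "'a set" and P W :: "nat \<Rightarrow> 'a set" and E :: "'a set set"
  assumes k_pos: "0 < k" and m0_pos: "0 < m0"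
    and kpartite: "kpartite_kgraph k V P E"
    and cover: "V = V0 \<union> (\<Union>j\<in>{1..k*t}. W j)"
    and V0_disjoint: "\<forall>j\<in>{1..k*t}. V0 \<inter> W j = {}"
    and W_disjoint: "\<forall>j\<in>{1..k*t}. \<forall>j'\<in>{1..k*t}. j \<noteq> j' \<longrightarrow> W j \<inter> W j' = {}"
    and parts_cluster_unions: "\<forall>i<k. \<exists>J\<subseteq>{1..k*t}. card J = t \<and> P i - V0 = (\<Union>j\<in>J. W j)"
    and card_W: "\<forall>j\<in>{1..k*t}. card (W j) = m0"
begin

abbreviation cpart :: "nat \<Rightarrow> nat set" where
  "cpart \<equiv> cluster_parts (k*t) P W"

lemma finite_V: "finite V"
  and P_subset_V: "i < k \<Longrightarrow> P i \<subseteq> V"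
  and V_eq_UN_P: "V = (\<Union>i<k. P i)"
  and P_disjoint: "i < k \<Longrightarrow> i' < k \<Longrightarrow> i \<noteq> i' \<Longrightarrow> P i \<inter> P i' = {}"
  and edge_props: "e \<in> E \<Longrightarrow> e \<subseteq> V \<and> card e = k \<and> legal k P e"
  using kpartite unfolding kpartite_kgraph_def by auto

lemma W_subset_V: "j \<in> {1..k*t} \<Longrightarrow> W j \<subseteq> V"
  by (subst cover) blast

lemma finite_W: "j \<in> {1..k*t} \<Longrightarrow> finite (W j)"
  using W_subset_V finite_V by (rule finite_subset)

lemma finite_PiE_clusters: "J \<subseteq> {1..k*t} \<Longrightarrow> finite (PiE J W)"
  using finite_W by (intro finite_PiE) (auto dest: finite_subset[OF _ finite_atLeastAtMost])

lemma W_nonempty: "j \<in> {1..k*t} \<Longrightarrow> W j \<noteq> {}"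
  using card_W m0_pos by fastforce

lemma cpart_subset: "cpart i \<subseteq> {1..k*t}"
  and W_subset_P: "j \<in> cpart i \<Longrightarrow> W j \<subseteq> P i"
  by (auto simp: cluster_parts_def)

lemma finite_cpart: "finite (cpart i)"
  using cpart_subset by (rule finite_subset) simp

lemma cpart_card_and_union:
  assumes "i < k"
  shows "card (cpart i) = t" and "P i - V0 = (\<Union>j\<in>cpart i. W j)"
proof -
  obtain J where J: "J \<subseteq> {1..k*t}" "card J = t" "P i - V0 = (\<Union>j\<in>J. W j)"
    using parts_cluster_unions assms by blast
  have "cpart i = J"
  proof
    show "J \<subseteq> cpart i"
      using J by (auto simp: cluster_parts_def)
    show "cpart i \<subseteq> J"
    proof
      fix j assume j: "j \<in> cpart i"
      then have j_range: "j \<in> {1..k*t}"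
        using cpart_subset by blast
      then obtain x where x: "x \<in> W j"
        using W_nonempty by blast
      moreover have "x \<notin> V0"
        using x j_range V0_disjoint by blast
      ultimately have "x \<in> P i - V0"
        using W_subset_P[OF j] by blast
      then obtain j' where j': "j' \<in> J" "x \<in> W j'"
        using J(3) by blast
      then have "j' \<in> {1..k*t}"
        using J(1) by blast
      then show "j \<in> J"
        using W_disjoint j_range x j' by (metis disjoint_iff)
    qed
  qed
  then show "card (cpart i) = t" "P i - V0 = (\<Union>j\<in>cpart i. W j)"
    using J by simp_all
qed

lemma cpart_disjoint: "disjoint_family_on cpart {..<k}"
  unfolding disjoint_family_on_def
proof (intro ballI impI equals0I)
  fix i i' j assume "i \<in> {..<k}" "i' \<in> {..<k}" "i \<noteq> i'" and j: "j \<in> cpart i \<inter> cpart i'"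
  then have "P i \<inter> P i' = {}"
    using P_disjoint by simp
  moreover have "W j \<subseteq> P i" "W j \<subseteq> P i'"
    using j W_subset_P by auto
  moreover have "W j \<noteq> {}"
    using j cpart_subset W_nonempty by blast
  ultimately show False
    by blast
qed

lemma clusters_covered: "{1..k*t} \<subseteq> (\<Union>i<k. cpart i)"
proof
  fix j assume j: "j \<in> {1..k*t}"
  then obtain x where x: "x \<in> W j"
    using W_nonempty by blast
  then obtain i where i: "i < k" "x \<in> P i"
    using j W_subset_V V_eq_UN_P by blast
  moreover have "x \<notin> V0"
    using x j V0_disjoint by blast
  ultimately obtain j' where j': "j' \<in> cpart i" "x \<in> W j'"
    using cpart_card_and_union(2)[OF i(1)] by blast
  then have "j' = j"
    using j x cpart_subset W_disjoint by (metis disjoint_iff subsetD)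
  then show "j \<in> (\<Union>i<k. cpart i)"
    using i(1) j' by blast
qed

lemma legal_cluster_set_misses_one_part:
  assumes "S \<subseteq> {1..k*t}" "card S = k - 1" "legal k cpart S"
  obtains i where "i < k" "S \<inter> cpart i = {}" "\<forall>i'<k. i' \<noteq> i \<longrightarrow> card (S \<inter> cpart i') = 1"
proof (rule legal_set_misses_one_part)
  show "finite S"
    using assms(1) finite_subset by blast
  show "S \<subseteq> (\<Union>i<k. cpart i)"
    using assms(1) clusters_covered by blast
  show "card S + 1 = k"
    using assms(2) k_pos by simp
qed (use assms(3) cpart_disjoint that in \<open>auto simp: legal_def\<close>)

lemma card_PiE_clusters:
  assumes "S \<subseteq> {1..k*t}"
  shows "card (PiE S W) = m0 ^ card S"
proof -
  have "card (PiE S W) = (\<Prod>j\<in>S. card (W j))"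
    using assms by (intro card_PiE) (simp add: finite_subset)
  also have "\<dots> = (\<Prod>j\<in>S. m0)"
    using assms card_W by (intro prod.cong) auto
  finally show ?thesis
    by simp
qed

lemma transversal_subset_V:
  assumes "S \<subseteq> {1..k*t}" "f \<in> PiE S W"
  shows "f ` S \<subseteq> V"
  using assms W_subset_V PiE_mem by blast

lemma card_transversal:
  assumes S: "S \<subseteq> {1..k*t}" and f: "f \<in> PiE S W"
  shows "card (f ` S) = card S"
proof (rule card_image, rule inj_onI)
  fix a b assume ab: "a \<in> S" "b \<in> S" "f a = f b"
  show "a = b"
  proof (rule ccontr)
    assume "a \<noteq> b"
    then have "W a \<inter> W b = {}"
      using ab(1,2) S W_disjoint by (simp add: subset_iff)
    then show False
      using ab PiE_mem[OF f] by (metis disjoint_iff)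
  qed
qed

lemma legal_transversal:
  assumes S: "S \<subseteq> {1..k*t}" "legal k cpart S" and f: "f \<in> PiE S W"
  shows "legal k P (f ` S)"
  unfolding legal_def
proof (intro allI impI)
  fix i assume i: "i < k"
  have "f ` S \<inter> P i \<subseteq> f ` (S \<inter> cpart i)"
  proof
    fix x assume "x \<in> f ` S \<inter> P i"
    then obtain a where a: "a \<in> S" "x = f a" "x \<in> P i"
      by blast
    then obtain i' where i': "i' < k" "a \<in> cpart i'"
      using S(1) clusters_covered by blast
    then have "x \<in> P i'"
      using a PiE_mem[OF f] W_subset_P by blast
    then have "i' = i"
      using a(3) i i'(1) P_disjoint by (metis disjoint_iff)
    then show "x \<in> f ` (S \<inter> cpart i)"
      using a i'(2) by blast
  qed
  have finite_S: "finite S"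
    using S(1) by (rule finite_subset) simp
  have "card (f ` S \<inter> P i) \<le> card (f ` (S \<inter> cpart i))"
    using finite_S \<open>f ` S \<inter> P i \<subseteq> f ` (S \<inter> cpart i)\<close> by (intro card_mono) auto
  also have "\<dots> \<le> card (S \<inter> cpart i)"
    using finite_S by (intro card_image_le) auto
  also have "\<dots> \<le> 1"
    using S(2) i by (simp add: legal_def)
  finally show "card (f ` S \<inter> P i) \<le> 1" .
qed

definition cluster_edge_count :: "nat set \<Rightarrow> nat" where
  "cluster_edge_count J = card {g \<in> PiE J W. g ` J \<in> E}"

lemma cluster_edge_count_le:
  assumes "J \<subseteq> {1..k*t}" "card J = k"
  shows "cluster_edge_count J \<le> m0 ^ k"
proof -
  have "cluster_edge_count J \<le> card (PiE J W)"
    unfolding cluster_edge_count_def using finite_PiE_clusters[OF assms(1)] by (intro card_mono) auto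
  then show ?thesis
    using card_PiE_clusters assms by simp
qed

lemma density_cluster_tuple:
  assumes "J \<subseteq> {1..k*t}" "card J = k"
  shows "density k E (cluster_tuple W J) = real (cluster_edge_count J) / real m0 ^ k"
proof -
  let ?s = "sorted_list_of_set J"
  have "finite J"
    using assms(1) finite_subset by blast
  then have s: "distinct ?s" "set ?s = J" "length ?s = k"
    using assms(2) by auto
  then have bij: "bij_betw ((!) ?s) {..<k} J"
    by (intro bij_betw_nth) auto
  have "e_count k E (cluster_tuple W J) = cluster_edge_count J"
    unfolding e_count_def cluster_tuple_def cluster_edge_count_def
    using card_edge_tuples_reindex[OF bij] by simp
  moreover have "(\<Prod>i<k. real (card (cluster_tuple W J i))) = (\<Prod>i<k. real m0)"
  proof (rule prod.cong)
    fix i assume "i \<in> {..<k}"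
    then have "?s ! i \<in> {1..k*t}"
      using s assms(1) nth_mem by fastforce
    then show "real (card (cluster_tuple W J i)) = real m0"
      using card_W by (simp add: cluster_tuple_def)
  qed simp
  ultimately show ?thesis
    unfolding density_def by simp
qed

definition cluster_of :: "'a \<Rightarrow> nat" where
  "cluster_of w = (SOME j. j \<in> {1..k*t} \<and> w \<in> W j)"

lemma cluster_of_in_cpart:
  assumes i: "i < k" and w: "w \<in> P i - V0"
  shows "cluster_of w \<in> cpart i" and "w \<in> W (cluster_of w)"
proof -
  have "w \<in> (\<Union>j\<in>cpart i. W j)"
    using w cpart_card_and_union(2)[OF i] by simp
  then obtain j where j: "j \<in> cpart i" "w \<in> W j"
    by blast
  then have "j \<in> {1..k*t} \<and> w \<in> W j"
    using cpart_subset by blast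
  then have c: "cluster_of w \<in> {1..k*t} \<and> w \<in> W (cluster_of w)"
    unfolding cluster_of_def by (rule someI)
  then have "cluster_of w = j"
    using j cpart_subset W_disjoint by (metis disjoint_iff subsetD)
  then show "cluster_of w \<in> cpart i" "w \<in> W (cluster_of w)"
    using j c by simp_all
qed

context
  fixes S :: "nat set" and i :: nat
  assumes S_range: "S \<subseteq> {1..k*t}" and S_card: "card S = k - 1"
    and i: "i < k" "S \<inter> cpart i = {}"
    and S_other: "\<forall>i'<k. i' \<noteq> i \<longrightarrow> card (S \<inter> cpart i') = 1"
begin

lemma finite_S: "finite S"
  using S_range by (rule finite_subset) simp

lemma legal_S: "legal k cpart S"
  unfolding legal_def using i(2) S_other by (metis card.empty le_refl zero_le)

lemma insert_cluster_legal:
  assumes j: "j \<in> cpart i"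
  shows "insert j S \<subseteq> {1..k*t}" "card (insert j S) = k" "legal k cpart (insert j S)"
proof -
  show "insert j S \<subseteq> {1..k*t}"
    using S_range j cpart_subset by blast
  have "j \<notin> S"
    using i(2) j by blast
  then show "card (insert j S) = k"
    using finite_S S_card k_pos by simp
  show "legal k cpart (insert j S)"
    unfolding legal_def
  proof (intro allI impI)
    fix i' assume i': "i' < k"
    show "card (insert j S \<inter> cpart i') \<le> 1"
    proof (cases "i' = i")
      case True
      then show ?thesis
        using i(2) j by (simp add: Int_insert_left)
    next
      case False
      then have "j \<notin> cpart i'"
        using j i(1) i' cpart_disjoint by (auto simp: disjoint_family_on_def)
      then show ?thesis
        using legal_S i' by (simp add: legal_def Int_insert_left)
    qed
  qed
qed

text \<open>Every part other than P i already contains a vertex of the transversal, so legality of the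
  edge forces the new vertex into P i.\<close>
lemma extension_vertex_in_missing_part:
  assumes f: "f \<in> PiE S W" and e: "insert w (f ` S) \<in> E"
  shows "w \<in> P i"
proof -
  let ?T = "f ` S"
  have edge: "insert w ?T \<subseteq> V" "card (insert w ?T) = k" "legal k P (insert w ?T)"
    using edge_props[OF e] by auto
  have "card ?T + 1 = k"
    using card_transversal[OF S_range f] S_card k_pos by simp
  then have "w \<notin> ?T"
    using edge(2) by (auto simp: insert_absorb)
  obtain i' where i': "i' < k" "w \<in> P i'"
    using edge(1) V_eq_UN_P by blast
  have "i' = i"
  proof (rule ccontr)
    assume "i' \<noteq> i"
    then obtain a where "S \<inter> cpart i' = {a}"
      using S_other i'(1) by (auto simp: card_1_singleton_iff)
    then have "a \<in> S" "a \<in> cpart i'"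
      by auto
    then have a: "f a \<in> P i'" "f a \<in> ?T"
      using PiE_mem[OF f] W_subset_P by auto
    then have "{w, f a} \<subseteq> insert w ?T \<inter> P i'"
      using i'(2) by blast
    then have "card {w, f a} \<le> card (insert w ?T \<inter> P i')"
      using finite_subset[OF edge(1) finite_V] by (intro card_mono) auto
    also have "\<dots> \<le> 1"
      using edge(3) i'(1) by (simp add: legal_def)
    finally show False
      using \<open>w \<notin> ?T\<close> a(2) by (cases "w = f a") auto
  qed
  then show ?thesis
    using i'(2) by simp
qed

lemma deg_transversal_le:
  assumes f: "f \<in> PiE S W"
  shows "deg k E (f ` S) \<le> card {w \<in> P i - V0. insert w (f ` S) \<in> E} + card V0"
proof -
  let ?T = "f ` S"
  have "card ?T + 1 = k"
    using card_transversal[OF S_range f] S_card k_pos by simp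
  then have "deg k E ?T = card {w. insert w ?T \<in> E}"
    by (rule deg_eq_card_insert)
  also have "\<dots> \<le> card ({w \<in> P i - V0. insert w ?T \<in> E} \<union> V0)"
  proof (rule card_mono)
    show "finite ({w \<in> P i - V0. insert w ?T \<in> E} \<union> V0)"
      using finite_V P_subset_V[OF i(1)] W_subset_V cover by (auto intro: finite_subset)
    show "{w. insert w ?T \<in> E} \<subseteq> {w \<in> P i - V0. insert w ?T \<in> E} \<union> V0"
      using extension_vertex_in_missing_part[OF f] by blast
  qed
  also have "\<dots> \<le> card {w \<in> P i - V0. insert w ?T \<in> E} + card V0"
    by (rule card_Un_le)
  finally show ?thesis .
qed

lemma inj_on_extend_transversal:
  "inj_on (\<lambda>(f, w). (cluster_of w, f(cluster_of w := w))) (PiE S W \<times> (P i - V0))"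
proof (rule inj_onI)
  fix p q
  assume p: "p \<in> PiE S W \<times> (P i - V0)" and q: "q \<in> PiE S W \<times> (P i - V0)"
    and eq: "(\<lambda>(f, w). (cluster_of w, f(cluster_of w := w))) p
               = (\<lambda>(f, w). (cluster_of w, f(cluster_of w := w))) q"
  obtain f w f' w' where pq: "p = (f, w)" "q = (f', w')"
    by (cases p, cases q)
  have f: "f \<in> PiE S W" "w \<in> P i - V0" and f': "f' \<in> PiE S W"
    using p q pq by auto
  have "(cluster_of w, f(cluster_of w := w)) = (cluster_of w', f'(cluster_of w' := w'))"
    using eq unfolding pq by (simp only: case_prod_conv)
  then have upd_eq: "f(cluster_of w := w) = f'(cluster_of w := w')"
    by (metis prod.inject)
  have "cluster_of w \<notin> S"
    using cluster_of_in_cpart(1)[OF i(1) f(2)] i(2) by blast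
  then have "f (cluster_of w) = f' (cluster_of w)"
    using PiE_arb f(1) f' by metis
  then have "f = f'"
    using upd_eq by (metis fun_upd_idem_iff fun_upd_upd)
  moreover have "w = w'"
    using fun_cong[OF upd_eq, of "cluster_of w"] by simp
  ultimately show "p = q"
    using pq by simp
qed

lemma extend_transversal_edge:
  assumes f: "f \<in> PiE S W" and w: "w \<in> P i - V0" and e: "insert w (f ` S) \<in> E"
  defines "j \<equiv> cluster_of w"
  shows "f(j := w) \<in> {g \<in> PiE (insert j S) W. g ` insert j S \<in> E}"
proof -
  have "w \<in> W j" "j \<notin> S"
    using cluster_of_in_cpart[OF i(1) w] i(2) unfolding j_def by blast+
  then have "f(j := w) \<in> PiE (insert j S) W"
    using f by (auto simp: PiE_iff extensional_def)
  moreover have "f(j := w) ` insert j S = insert w (f ` S)"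
    using \<open>j \<notin> S\<close> by auto
  ultimately show ?thesis
    using e by (metis (mono_tags, lifting) mem_Collect_eq)
qed

text \<open>Each extension (f, w) of a transversal of S is recorded as the transversal f(j := w) of
  S + j, where j is the cluster containing w.\<close>
lemma sum_extensions_le:
  "(\<Sum>f\<in>PiE S W. card {w \<in> P i - V0. insert w (f ` S) \<in> E})
     \<le> (\<Sum>j\<in>cpart i. cluster_edge_count (insert j S))"
proof -
  let ?ext = "SIGMA f:PiE S W. {w \<in> P i - V0. insert w (f ` S) \<in> E}"
  let ?edges = "SIGMA j:cpart i. {g \<in> PiE (insert j S) W. g ` insert j S \<in> E}"
  let ?extend = "\<lambda>(f, w). (cluster_of w, f(cluster_of w := w))"
  have "inj_on ?extend ?ext"
    by (rule inj_on_subset[OF inj_on_extend_transversal]) blast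
  moreover have "?extend ` ?ext \<subseteq> ?edges"
  proof (rule image_subsetI)
    fix p assume "p \<in> ?ext"
    then obtain f w where p: "p = (f, w)"
      and f: "f \<in> PiE S W" "w \<in> P i - V0" "insert w (f ` S) \<in> E"
      by blast
    show "?extend p \<in> ?edges"
      using cluster_of_in_cpart(1)[OF i(1) f(2)] extend_transversal_edge[OF f]
      unfolding p prod.case by (rule SigmaI)
  qed
  moreover have finite_edge_sets: "finite {g \<in> PiE (insert j S) W. g ` insert j S \<in> E}"
    if "j \<in> cpart i" for j
    using finite_PiE_clusters[OF insert_cluster_legal(1)[OF that]] by simp
  moreover have finite_ext_sets: "finite {w \<in> P i - V0. insert w (f ` S) \<in> E}" for f
    using P_subset_V[OF i(1)] by (intro finite_subset[OF _ finite_V]) blast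
  ultimately have "card ?ext \<le> card ?edges"
    using finite_cpart by (intro card_inj_on_le finite_SigmaI)
  moreover have "card ?ext = (\<Sum>f\<in>PiE S W. card {w \<in> P i - V0. insert w (f ` S) \<in> E})"
    using finite_PiE_clusters[OF S_range] finite_ext_sets by (intro card_SigmaI) auto
  moreover have "card ?edges = (\<Sum>j\<in>cpart i. cluster_edge_count (insert j S))"
    unfolding cluster_edge_count_def using finite_cpart finite_edge_sets by (intro card_SigmaI) auto
  ultimately show ?thesis
    by simp
qed

end

end

locale clustered_kgraph_min_codeg = clustered_kgraph +
  fixes n :: nat and eps d epss :: real
  assumes d_nonneg: "0 \<le> d" and epss_pos: "0 < epss"
    and d_epss: "d + real k * epss \<le> eps / 2" and sqrt_epss: "sqrt epss \<le> eps / 4"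
    and parts_size: "\<forall>i<k. card (P i) = n"
    and mindeg: "real (min_legal_codeg k V P E) \<ge> (1/2 + eps) * real n"
    and V0_small: "real (card V0) \<le> epss * real k * real n"
begin

abbreviation R :: "nat set set" where
  "R \<equiv> cluster_edges k t P E W epss d"

definition irregular_sets :: "nat set set" where
  "irregular_sets = {J. J \<subseteq> {1..k*t} \<and> card J = k \<and> legal k cpart J \<and>
                        \<not> eps_regular k E epss (cluster_tuple W J)}"

lemma finite_irregular_sets: "finite irregular_sets"
  by (rule finite_subset[of _ "Pow {1..k*t}"]) (auto simp: irregular_sets_def)

lemma eps_nonneg: "0 \<le> eps"
  using sqrt_epss real_sqrt_ge_zero[of epss] epss_pos by linarith

lemma cluster_edge_count_le_split:
  assumes J: "J \<subseteq> {1..k*t}" "card J = k" "legal k cpart J"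
  shows "real (cluster_edge_count J)
           \<le> real m0 ^ k * (of_bool (J \<in> R) + of_bool (J \<in> irregular_sets) + d)"
proof (cases "J \<in> R \<or> J \<in> irregular_sets")
  case True
  have "real (cluster_edge_count J) \<le> real m0 ^ k"
    using cluster_edge_count_le[OF J(1,2)] by (metis of_nat_le_iff of_nat_power)
  moreover have "1 \<le> of_bool (J \<in> R) + of_bool (J \<in> irregular_sets) + d"
    using True d_nonneg by auto
  then have "real m0 ^ k \<le> real m0 ^ k * (of_bool (J \<in> R) + of_bool (J \<in> irregular_sets) + d)"
    using mult_left_mono[of 1 _ "real m0 ^ k"] by simp
  ultimately show ?thesis
    by linarith
next
  case False
  then have "density k E (cluster_tuple W J) < d"
    using J unfolding cluster_edges_def irregular_sets_def by auto
  then have "real (cluster_edge_count J) < d * real m0 ^ k"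
    using density_cluster_tuple[OF J(1,2)] m0_pos by (simp add: divide_less_eq)
  then show ?thesis
    using False by (simp add: mult.commute)
qed

lemma cluster_volume_le: "real t * real m0 \<le> real n"
proof -
  obtain i where i: "i < k"
    using k_pos by blast
  have "card (P i - V0) = (\<Sum>j\<in>cpart i. card (W j))"
    unfolding cpart_card_and_union(2)[OF i]
  proof (rule card_UN_disjoint)
    show "\<forall>j\<in>cpart i. finite (W j)"
      using cpart_subset finite_W by blast
    show "\<forall>j\<in>cpart i. \<forall>j'\<in>cpart i. j \<noteq> j' \<longrightarrow> W j \<inter> W j' = {}"
      using cpart_subset[of i] W_disjoint by (meson subsetD)
  qed (rule finite_cpart)
  also have "\<dots> = (\<Sum>j\<in>cpart i. m0)"
    using cpart_subset card_W by (intro sum.cong) auto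
  also have "\<dots> = t * m0"
    using cpart_card_and_union(1)[OF i] by simp
  finally have "card (P i - V0) = t * m0" .
  moreover have "card (P i - V0) \<le> card (P i)"
    using finite_subset[OF P_subset_V[OF i] finite_V] by (rule card_mono) blast
  ultimately have "t * m0 \<le> n"
    using parts_size i by simp
  then show ?thesis
    by (simp flip: of_nat_mult)
qed

context
  fixes S :: "nat set" and i :: nat
  assumes S_range: "S \<subseteq> {1..k*t}" and S_card: "card S = k - 1"
    and i: "i < k" "S \<inter> cpart i = {}"
    and S_other: "\<forall>i'<k. i' \<noteq> i \<longrightarrow> card (S \<inter> cpart i') = 1"
begin

lemma extensions_lower_bound:
  assumes f: "f \<in> PiE S W"
  shows "(1/2 + eps - epss * real k) * real n \<le> card {w \<in> P i - V0. insert w (f ` S) \<in> E}"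
proof -
  have "f ` S \<subseteq> V" "card (f ` S) = k - 1" "legal k P (f ` S)"
    using transversal_subset_V[OF S_range f] card_transversal[OF S_range f] S_card
      legal_transversal[OF S_range legal_S[OF S_range S_card i S_other] f] by simp_all
  then have "min_legal_codeg k V P E \<le> deg k E (f ` S)"
    by (rule min_legal_codeg_le_deg[OF finite_V])
  then have "(1/2 + eps) * real n \<le> deg k E (f ` S)"
    using mindeg of_nat_mono by fastforce
  then show ?thesis
    using deg_transversal_le[OF S_range S_card i S_other f] V0_small by (simp add: algebra_simps)
qed

lemma sum_cluster_edge_count_le:
  "(\<Sum>j\<in>cpart i. real (cluster_edge_count (insert j S)))
     \<le> real m0 ^ k * (card (cpart i \<inter> {j. insert j S \<in> R})
                       + card (cpart i \<inter> {j. insert j S \<in> irregular_sets}) + d * real t)"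
proof -
  have "(\<Sum>j\<in>cpart i. real (cluster_edge_count (insert j S)))
          \<le> (\<Sum>j\<in>cpart i. real m0 ^ k *
                (of_bool (insert j S \<in> R) + of_bool (insert j S \<in> irregular_sets) + d))"
    using cluster_edge_count_le_split insert_cluster_legal[OF S_range S_card i S_other]
    by (intro sum_mono) auto
  also have "\<dots> = real m0 ^ k * (card (cpart i \<inter> {j. insert j S \<in> R})
                       + card (cpart i \<inter> {j. insert j S \<in> irregular_sets}) + d * real t)"
    using finite_cpart cpart_card_and_union(1)[OF i(1)]
    by (simp add: sum.distrib sum_distrib_left[symmetric] algebra_simps)
  finally show ?thesis .
qed

lemma extension_count_bound:
  "(1/2 + eps/2) * real t
     \<le> card (cpart i \<inter> {j. insert j S \<in> R}) + card (cpart i \<inter> {j. insert j S \<in> irregular_sets})"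
  (is "_ \<le> ?X")
proof -
  let ?c = "1/2 + eps - epss * real k"
  have c_bound: "1/2 + eps/2 \<le> ?c - d"
    using d_epss by (simp add: mult.commute)
  then have "0 \<le> ?c"
    using eps_nonneg d_nonneg by linarith
  have "real m0 ^ k = real m0 ^ (k - 1) * real m0"
    using k_pos by (cases k) (simp_all add: mult.commute)
  then have "real m0 ^ k * (?c * real t) = real m0 ^ (k - 1) * (?c * (real t * real m0))"
    by (simp add: algebra_simps)
  also have "\<dots> \<le> real m0 ^ (k - 1) * (?c * real n)"
    using cluster_volume_le \<open>0 \<le> ?c\<close> by (intro mult_left_mono) auto
  also have "\<dots> \<le> (\<Sum>f\<in>PiE S W. real (card {w \<in> P i - V0. insert w (f ` S) \<in> E}))"
    using sum_mono[of "PiE S W" "\<lambda>_. ?c * real n"] extensions_lower_bound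
      card_PiE_clusters[OF S_range] S_card by simp
  also have "\<dots> \<le> (\<Sum>j\<in>cpart i. real (cluster_edge_count (insert j S)))"
    using sum_extensions_le[OF S_range S_card i S_other] by (simp flip: of_nat_sum)
  also have "\<dots> \<le> real m0 ^ k * (?X + d * real t)"
    by (rule sum_cluster_edge_count_le)
  finally have "?c * real t \<le> ?X + d * real t"
    by (rule mult_left_le_imp_le) (simp add: m0_pos)
  moreover have "(1/2 + eps/2) * real t \<le> (?c - d) * real t"
    using c_bound by (intro mult_right_mono) auto
  ultimately show ?thesis
    by (simp add: algebra_simps)
qed

end

lemma low_degree_many_irregular:
  assumes S: "S \<subseteq> {1..k*t}" "card S = k - 1" "legal k cpart S"
    and low: "real (deg k R S) < (1/2 + eps/4) * real t"
  shows "sqrt epss * real t \<le> card {J \<in> irregular_sets. S \<subseteq> J}"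
proof -
  obtain i where i: "i < k" "S \<inter> cpart i = {}" "\<forall>i'<k. i' \<noteq> i \<longrightarrow> card (S \<inter> cpart i') = 1"
    using legal_cluster_set_misses_one_part[OF S] .
  have "card (cpart i \<inter> {j. insert j S \<in> R}) \<le> card {j. insert j S \<in> R}"
    by (rule card_mono) (auto simp: cluster_edges_def intro: finite_subset[of _ "{1..k*t}"])
  also have "\<dots> = deg k R S"
    using deg_eq_card_insert[of S k] S(2) k_pos by simp
  finally have R_part: "card (cpart i \<inter> {j. insert j S \<in> R}) \<le> deg k R S" .
  have "inj_on (\<lambda>j. insert j S) (cpart i \<inter> {j. insert j S \<in> irregular_sets})"
    using i(2) by (intro inj_onI) (metis IntE disjoint_iff insertE insertI1)
  moreover have "(\<lambda>j. insert j S) ` (cpart i \<inter> {j. insert j S \<in> irregular_sets})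
                   \<subseteq> {J \<in> irregular_sets. S \<subseteq> J}"
    by blast
  ultimately have irr_part:
    "card (cpart i \<inter> {j. insert j S \<in> irregular_sets}) \<le> card {J \<in> irregular_sets. S \<subseteq> J}"
    using finite_irregular_sets by (intro card_inj_on_le) auto
  have "sqrt epss * real t \<le> eps/4 * real t"
    using sqrt_epss by (intro mult_right_mono) auto
  then show ?thesis
    using extension_count_bound[OF S(1,2) i] R_part irr_part low by (simp add: algebra_simps)
qed

lemma card_low_degree_le:
  assumes "0 < t" and few_irregular: "real (card irregular_sets) \<le> epss * real (k*t) ^ k"
  shows "real (card {S. S \<subseteq> {1..k*t} \<and> card S = k - 1 \<and> legal k cpart S \<and>
                        real (deg k R S) < (1/2 + eps/4) * real t})
         \<le> real k ^ (k+1) * sqrt epss * real t ^ (k - 1)"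
    (is "real (card ?Low) \<le> ?bound")
proof -
  have "finite ?Low"
    by (rule finite_subset[of _ "Pow {1..k*t}"]) auto
  have "card {S \<in> ?Low. S \<subseteq> J} \<le> k" if J: "J \<in> irregular_sets" for J
  proof -
    have J_props: "finite J" "card J = k"
      using J finite_subset[of J "{1..k*t}"] by (auto simp: irregular_sets_def)
    have "card {S \<in> ?Low. S \<subseteq> J} \<le> card {S. S \<subseteq> J \<and> card S = k - 1}"
      using J_props(1) by (intro card_mono) auto
    also have "\<dots> = k choose (k - 1)"
      using n_subsets[OF J_props(1)] J_props(2) by simp
    also have "\<dots> = k"
      using k_pos by (simp add: binomial_symmetric[symmetric])
    finally show ?thesis .
  qed
  then have "card ?Low * (sqrt epss * real t) \<le> card irregular_sets * real k"
    using \<open>finite ?Low\<close> finite_irregular_sets low_degree_many_irregular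
    by (intro double_counting_le) auto
  also have "\<dots> \<le> epss * real (k*t) ^ k * real k"
    using few_irregular by (intro mult_right_mono) auto
  also have "\<dots> = ?bound * (sqrt epss * real t)"
  proof -
    have "epss = sqrt epss * sqrt epss"
      using epss_pos by simp
    moreover have "real t ^ k = real t * real t ^ (k - 1)"
      using k_pos by (cases k) simp_all
    ultimately show ?thesis
      by (simp add: power_mult_distrib algebra_simps)
  qed
  finally show ?thesis
    using epss_pos \<open>0 < t\<close> by (simp add: mult_le_cancel_right_pos)
qed

end

theorem proposition6p3:
  fixes k n t m0 :: nat and eps d epss :: real
    and V V0 :: "'a set" and P W :: "nat \<Rightarrow> 'a set" and E :: "'a set set"
  assumes "k \<ge> 2" and "n \<ge> 1" and "t \<ge> 1" and "m0 \<ge> 1"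
    and "0 < eps" and "eps < 1" and "d > 0" and "epss > 0"
    and "d + real k * epss \<le> eps / 2" and "sqrt epss \<le> eps / 4"
    and H: "kpartite_kgraph k V P E"
    and parts_size: "\<forall>i<k. card (P i) = n"
    and mindeg: "real (min_legal_codeg k V P E) \<ge> (1/2 + eps) * real n"
    and cover: "V = V0 \<union> (\<Union>j\<in>{1..k*t}. W j)"
    and disj0: "\<forall>j\<in>{1..k*t}. V0 \<inter> W j = {}"
    and disjW: "\<forall>j\<in>{1..k*t}. \<forall>j'\<in>{1..k*t}. j \<noteq> j' \<longrightarrow> W j \<inter> W j' = {}"
    and V0_small: "real (card V0) \<le> epss * real k * real n"
    and parts_union: "\<forall>i<k. \<exists>J\<subseteq>{1..k*t}. card J = t \<and> P i - V0 = (\<Union>j\<in>J. W j)"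
    and cl_size: "\<forall>j\<in>{1..k*t}. card (W j) = m0"
    and most_regular: "real (card {J. J \<subseteq> {1..k*t} \<and> card J = k \<and>
                           legal k (cluster_parts (k*t) P W) J \<and>
                           \<not> eps_regular k E epss (cluster_tuple W J)})
                       \<le> epss * real (k*t) ^ k"
  shows "real (card {S. S \<subseteq> {1..k*t} \<and> card S = k - 1 \<and>
                        legal k (cluster_parts (k*t) P W) S \<and>
                        real (deg k (cluster_edges k t P E W epss d) S)
                          < (1/2 + eps/4) * real t})
         \<le> real k ^ (k+1) * sqrt epss * real t ^ (k - 1)"
proof -
  interpret clustered_kgraph_min_codeg k t m0 V V0 P W E n eps d epss
    by unfold_locales (use assms in auto)
  show ?thesis
    using most_regular \<open>t \<ge> 1\<close> by (intro card_low_degree_le) (simp_all add: irregular_sets_def)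
qed

end
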